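(* Let $s,d,r>0$. Let $J:\mathbb{R}\to\mathbb{R}$ satisfy (J1)–(J3) below, and let $\alpha:\mathbb{R}\to\mathbb{R}$ be continuous and satisfy ($\alpha$1)–($\alpha$2) below (with $\alpha(+\infty)$ not necessarily equal to $1$). Then the equation $$-s\phi'(z)=d\Big(\int_{\mathbb{R}}J(y)\phi(z-y)dy-\phi(z)\Big)+r\phi(z)[\alpha(z)-\phi(z)],\quad z\in\mathbb{R},$$ admits a positive $C^1(\mathbb{R})$ solution $\phi$ with $\phi(-\infty)=0$ and $\phi(+\infty)=\alpha(+\infty)$, and there exist $\lambda_0>0$ and $B>0$ such that $\alpha(+\infty)\ge\phi(z)\ge\alpha(+\infty)-Be^{-\lambda_0z}$ for all $z\in\mathbb{R}$.
   Context: (J1) $J\ge0$ is Lebesgue measurable, $\int_{\mathbb{R}}J=1$, and there are $\eta>0$ and $y^-<0<y^+$ such that $J>0$ on $(y^--\eta,y^-+\eta)$ and on $(y^+-\eta,y^++\eta)$; (J2) $\int_{\mathbb{R}}J(y)\,y\,dy=0$; (J3) there are $-\infty\le\tilde\lambda<0<\hat\lambda\le+\infty$ such that $I(\lambda):=\int_{\mathbb{R}}J(y)e^{\lambda y}dy<+\infty$ for $\lambda\in(\tilde\lambda,\hat\lambda)$ and $I(\lambda)\to+\infty$ as $\lambda\downarrow\tilde\lambda$ and as $\lambda\uparrow\hat\lambda$. ($\alpha$1) $\alpha$ has finite limits $\alpha(\pm\infty)$ with $\alpha(-\infty)<0<\alpha(+\infty)$, and $\alpha(z)\le\alpha(+\infty)$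 for all $z$; ($\alpha$2) there exist $C>0$, $\rho>0$ with $\alpha(+\infty)-\alpha(z)\le Ce^{-\rho z}$ for all sufficiently large $z$. *)

theory Defs
  imports "HOL-Analysis.Analysis"
begin

definition expmom :: "(real \<Rightarrow> real) \<Rightarrow> real \<Rightarrow> ennreal" where
  "expmom J l = (\<integral>\<^sup>+ y. ennreal (J y * exp (l * y)) \<partial>lebesgue)"

definition ereal_down :: "ereal \<Rightarrow> real filter" where
  "ereal_down a = (if a = -\<infinity> then at_bot else at_right (real_of_ereal a))"

definition ereal_up :: "ereal \<Rightarrow> real filter" where
  "ereal_up b = (if b = \<infinity> then at_top else at_left (real_of_ereal b))"

end

theory Submission
  imports Defs
begin

text \<open>Adding \<open>\<beta> \<phi>\<close> to both sides turns the equation into \<open>s \<phi>' - \<beta> \<phi> = - F \<phi>\<close>, where for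
  large \<open>\<beta>\<close> the nonlinearity \<open>F \<phi> = d (J * \<phi>) + \<phi> (r \<alpha> - r \<phi> + \<beta> - d)\<close> is monotone in \<open>\<phi>\<close>
  on \<open>[0, \<alpha>(+\<infinity>)]\<close>. Bounded solutions are the fixed points of the monotone operator
  \<open>T \<phi> z = (1/s) \<integral>\<^sub>z\<^sup>\<infinity> exp (-\<beta>(t - z)/s) F \<phi> t dt\<close>.
  Iterating \<open>T\<close> from the super-solution \<open>min {\<alpha>(+\<infinity>), \<alpha>(+\<infinity>) exp (\<mu>(z - z\<^sub>0))}\<close> gives a
  decreasing sequence that stays above the sub-solution \<open>max {0, \<alpha>(+\<infinity>) - B exp (-\<kappa> z)}\<close>;
  the iterates are uniformly Lipschitz, so the limit is a continuous fixed point, hence a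
  \<open>C\<^sup>1\<close> solution squeezed between the two barriers. The barriers work because by (J2) the
  exponential moment of \<open>J\<close> is \<open>1 + O(\<lambda>\<^sup>2)\<close> near \<open>0\<close>, while \<open>\<alpha>\<close> is negative near \<open>-\<infinity>\<close> and
  approaches \<open>\<alpha>(+\<infinity>)\<close> exponentially fast.\<close>

section \<open>Exponentially weighted tail integrals\<close>

lemma exp_tail_kernel_integral:
  fixes c z :: real assumes c: "c > 0"
  shows "set_integrable lborel (einterval z \<infinity>) (\<lambda>t. exp (-c*(t-z)))"
    and "(LBINT t=ereal z..\<infinity>. exp (-c*(t-z))) = 1/c"
proof -
  let ?F = "\<lambda>t. - exp (-c*(t-z)) / c"
  have F': "\<And>t. (?F has_real_derivative exp (-c*(t-z))) (at t)"
    using c by (auto intro!: derivative_eq_intros simp: field_simps)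
  have "(?F \<longlongrightarrow> ?F z) (at_right z)"
    using c by (intro tendsto_intros) auto
  then have lim_z: "((?F \<circ> real_of_ereal) \<longlongrightarrow> -1/c) (at_right (ereal z))"
    unfolding ereal_tendsto_simps using c by simp
  have "((\<lambda>t. exp (-c*(t-z))) \<longlongrightarrow> 0) at_top"
    using c by real_asymp
  then have lim_top: "((?F \<circ> real_of_ereal) \<longlongrightarrow> 0) (at_left \<infinity>)"
    unfolding ereal_tendsto_simps using tendsto_divide[OF tendsto_minus tendsto_const[of c]] c
    by fastforce
  have z: "ereal z < \<infinity>" by simp
  show "set_integrable lborel (einterval z \<infinity>) (\<lambda>t. exp (-c*(t-z)))"
    by (rule interval_integral_FTC_nonneg(1)[OF z F' _ _ lim_z lim_top])
      (auto intro!: continuous_intros)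
  have "(LBINT t=ereal z..\<infinity>. exp (-c*(t-z))) = 0 - (-1/c)"
    by (rule interval_integral_FTC_nonneg(2)[OF z F' _ _ lim_z lim_top])
      (auto intro!: continuous_intros)
  then show "(LBINT t=ereal z..\<infinity>. exp (-c*(t-z))) = 1/c" by simp
qed

definition exp_tail :: "real \<Rightarrow> (real \<Rightarrow> real) \<Rightarrow> real \<Rightarrow> real" where
  "exp_tail c G z = (LBINT t=ereal z..\<infinity>. exp (-c*(t-z)) * G t)"

lemma exp_tail_eq_set_integral: "exp_tail c G z = (LINT t:{z<..}|lborel. exp (-c*(t-z)) * G t)"
  by (simp add: exp_tail_def interval_lebesgue_integral_def)

lemma set_integrable_exp_tail:
  fixes c K y z :: real
  assumes c: "c > 0" and G: "G \<in> borel_measurable lborel" and K: "\<And>t. \<bar>G t\<bar> \<le> K"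
  shows "set_integrable lborel (einterval y \<infinity>) (\<lambda>t. exp (-c*(t-z)) * G t)"
proof (rule set_integrable_bound)
  show "set_integrable lborel (einterval y \<infinity>) (\<lambda>t. (K * exp (c*(z - y))) * exp (-c*(t-y)))"
    using exp_tail_kernel_integral(1)[OF c] by (rule set_integrable_mult_right)
  show "set_borel_measurable lborel (einterval y \<infinity>) (\<lambda>t. exp (-c*(t-z)) * G t)"
    unfolding set_borel_measurable_def using G by measurable
  show "AE t in lborel. t \<in> einterval y \<infinity> \<longrightarrow>
      norm (exp (-c*(t-z)) * G t) \<le> norm (K * exp (c*(z - y)) * exp (-c*(t-y)))"
  proof (intro AE_I2 impI)
    fix t
    have "exp (c*(z - y)) * exp (-c*(t-y)) = exp (-c*(t-z))"
      by (simp add: exp_add[symmetric] algebra_simps)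
    moreover have "exp (-c*(t-z)) * \<bar>G t\<bar> \<le> exp (-c*(t-z)) * K"
      using K[of t] by (intro mult_left_mono) auto
    ultimately show "norm (exp (-c*(t-z)) * G t) \<le> norm (K * exp (c*(z - y)) * exp (-c*(t-y)))"
      by (simp add: abs_mult algebra_simps)
  qed
qed

lemma exp_tail_mono:
  assumes c: "c > 0" and G1: "G1 \<in> borel_measurable lborel" and G2: "G2 \<in> borel_measurable lborel"
    and K1: "\<And>t. \<bar>G1 t\<bar> \<le> K" and K2: "\<And>t. \<bar>G2 t\<bar> \<le> K" and le: "\<And>t. t > z \<Longrightarrow> G1 t \<le> G2 t"
  shows "exp_tail c G1 z \<le> exp_tail c G2 z"
  unfolding exp_tail_eq_set_integral
  using set_integrable_exp_tail[OF c G1 K1, of z z] set_integrable_exp_tail[OF c G2 K2, of z z] le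
  by (intro set_integral_mono) (auto intro!: mult_left_mono)

lemma exp_tail_bounds:
  assumes c: "c > 0" and G: "G \<in> borel_measurable lborel" and K: "\<And>t. 0 \<le> G t \<and> G t \<le> K"
  shows "0 \<le> exp_tail c G z" and "exp_tail c G z \<le> K / c"
proof -
  have K': "\<And>t. \<bar>G t\<bar> \<le> K" using K by (metis abs_of_nonneg)
  have "0 \<le> K" using K[of 0] by linarith
  have "exp_tail c (\<lambda>_. 0) z \<le> exp_tail c G z"
    by (rule exp_tail_mono[OF c _ G _ K']) (use K \<open>0 \<le> K\<close> in auto)
  then show "0 \<le> exp_tail c G z" by (simp add: exp_tail_def)
  have "exp_tail c G z \<le> exp_tail c (\<lambda>_. K) z"
    by (rule exp_tail_mono[OF c G _ K']) (use K \<open>0 \<le> K\<close> in auto)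
  also have "exp_tail c (\<lambda>_. K) z = K * (LBINT t=ereal z..\<infinity>. exp (-c*(t-z)))"
    unfolding exp_tail_def by (simp add: mult.commute)
  also have "\<dots> = K / c" using exp_tail_kernel_integral(2)[OF c] by simp
  finally show "exp_tail c G z \<le> K / c" .
qed

lemma tail_integral_has_derivative:
  fixes f :: "real \<Rightarrow> real"
  assumes f: "continuous_on UNIV f"
    and int: "\<And>y. interval_lebesgue_integrable lborel (ereal y) \<infinity> f"
  shows "((\<lambda>x. LBINT t=ereal x..\<infinity>. f t) has_real_derivative - f z) (at z)"
proof -
  define a where "a = z - 1"
  have split: "(\<lambda>x. LBINT t=ereal x..\<infinity>. f t) =
      (\<lambda>x. (LBINT t=ereal a..\<infinity>. f t) - (LBINT t=ereal a..ereal x. f t))"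
  proof
    fix x
    have "min (ereal a) (min (ereal x) \<infinity>) = ereal (min a x)" by (simp add: min_def)
    then have "interval_lebesgue_integrable lborel (min (ereal a) (min (ereal x) \<infinity>))
        (max (ereal a) (max (ereal x) \<infinity>)) f"
      using int[of "min a x"] by simp
    from interval_integral_sum[OF this]
    show "(LBINT t=ereal x..\<infinity>. f t) = (LBINT t=ereal a..\<infinity>. f t) - (LBINT t=ereal a..ereal x. f t)"
      by simp
  qed
  have "((\<lambda>u. LBINT t=ereal a..ereal u. f t) has_vector_derivative f z) (at z within {a..z+1})"
    by (rule interval_integral_FTC2) (use continuous_on_subset[OF f] in \<open>auto simp: a_def\<close>)
  moreover have "at z within {a..z+1} = at z" by (rule at_within_Icc_at) (auto simp: a_def)
  ultimately have "((\<lambda>u. LBINT t=ereal a..ereal u. f t) has_real_derivative f z) (at z)"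
    by (simp add: has_real_derivative_iff_has_vector_derivative)
  then have "((\<lambda>x. (LBINT t=ereal a..\<infinity>. f t) - (LBINT t=ereal a..ereal x. f t))
      has_real_derivative 0 - f z) (at z)"
    by (intro derivative_intros)
  then show ?thesis unfolding split by simp
qed

lemma exp_tail_has_derivative:
  assumes c: "c > 0" and G: "continuous_on UNIV G" and K: "\<And>t. \<bar>G t\<bar> \<le> K"
  shows "(exp_tail c G has_real_derivative (c * exp_tail c G z - G z)) (at z)"
proof -
  define f where "f t = exp (-c*t) * G t" for t
  have Gm: "G \<in> borel_measurable lborel" using borel_measurable_continuous_onI[OF G] by simp
  have "f = (\<lambda>t. exp (-c*(t-0)) * G t)" by (auto simp: f_def)
  then have int: "interval_lebesgue_integrable lborel (ereal y) \<infinity> f" for y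
    using set_integrable_exp_tail[OF c Gm K, of y 0]
    unfolding interval_lebesgue_integrable_def by simp
  have "continuous_on UNIV f" unfolding f_def by (intro continuous_intros G)
  then have P': "((\<lambda>x. LBINT t=ereal x..\<infinity>. f t) has_real_derivative - f z) (at z)"
    using int by (rule tail_integral_has_derivative)
  have factor: "exp_tail c G = (\<lambda>x. exp (c*x) * (LBINT t=ereal x..\<infinity>. f t))"
  proof
    fix x
    have "exp_tail c G x = (LBINT t=ereal x..\<infinity>. exp (c*x) * f t)"
      unfolding exp_tail_def f_def by (simp add: exp_add[symmetric] algebra_simps)
    then show "exp_tail c G x = exp (c*x) * (LBINT t=ereal x..\<infinity>. f t)" by simp
  qed
  let ?P = "LBINT t=ereal z..\<infinity>. f t"
  have "((\<lambda>x. exp (c*x) * (LBINT t=ereal x..\<infinity>. f t)) has_real_derivative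
      exp (c*z) * c * ?P + - f z * exp (c*z)) (at z)"
    by (rule DERIV_mult[OF _ P']) (auto intro!: derivative_eq_intros)
  moreover have "exp (c*z) * c * ?P + - f z * exp (c*z) = c * (exp (c*z) * ?P) - G z"
    by (simp add: f_def exp_minus field_simps)
  ultimately show ?thesis unfolding factor by metis
qed

lemma exp_tail_tendsto:
  assumes c: "c > 0" and Gm: "\<And>n. G n \<in> borel_measurable lborel" and G0m: "G0 \<in> borel_measurable lborel"
    and K: "\<And>n t. \<bar>G n t\<bar> \<le> K" and lim: "\<And>t. (\<lambda>n. G n t) \<longlonglongrightarrow> G0 t"
  shows "(\<lambda>n. exp_tail c (G n) z) \<longlonglongrightarrow> exp_tail c G0 z"
  unfolding exp_tail_eq_set_integral set_lebesgue_integral_def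
proof (rule integral_dominated_convergence)
  have "set_integrable lborel {z<..} (\<lambda>t. exp (-c*(t-z)))"
    using exp_tail_kernel_integral(1)[OF c, of z] by simp
  from set_integrable_mult_right[OF this, of K]
  show "integrable lborel (\<lambda>t. indicator {z<..} t *\<^sub>R (K * exp (-c*(t-z))))"
    unfolding set_integrable_def by simp
  show "AE t in lborel. norm (indicator {z<..} t *\<^sub>R (exp (-c*(t-z)) * G n t)) \<le>
      indicator {z<..} t *\<^sub>R (K * exp (-c*(t-z)))" for n
  proof (intro AE_I2)
    fix t
    have "\<bar>exp (-c*(t-z)) * G n t\<bar> \<le> K * exp (-c*(t-z))"
      using K[of n t] by (simp add: abs_mult mult.commute mult_left_mono)
    then show "norm (indicator {z<..} t *\<^sub>R (exp (-c*(t-z)) * G n t)) \<le>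
        indicator {z<..} t *\<^sub>R (K * exp (-c*(t-z)))"
      by (auto simp: indicator_def)
  qed
  show "AE t in lborel. (\<lambda>n. indicator {z<..} t *\<^sub>R (exp (-c*(t-z)) * G n t)) \<longlonglongrightarrow>
      indicator {z<..} t *\<^sub>R (exp (-c*(t-z)) * G0 t)"
    by (intro AE_I2 tendsto_intros lim)
  show "(\<lambda>t. indicator {z<..} t *\<^sub>R (exp (-c*(t-z)) * G0 t)) \<in> borel_measurable lborel"
    using G0m by measurable
  show "(\<lambda>t. indicator {z<..} t *\<^sub>R (exp (-c*(t-z)) * G n t)) \<in> borel_measurable lborel" for n
    using Gm[of n] by measurable
qed

lemma gronwall_antimono:
  fixes a x y :: real
  assumes "x \<le> y"
    and w': "\<And>t. x \<le> t \<Longrightarrow> t \<le> y \<Longrightarrow> (w has_real_derivative w' t) (at t)"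
    and le: "\<And>t. x \<le> t \<Longrightarrow> t \<le> y \<Longrightarrow> w' t \<le> a * w t"
  shows "exp (-a*y) * w y \<le> exp (-a*x) * w x"
proof (rule DERIV_nonpos_imp_nonincreasing[OF assms(1)])
  fix t assume t: "x \<le> t" "t \<le> y"
  have "((\<lambda>t. exp (-a*t) * w t) has_real_derivative
      exp (-a*t) * (-a) * w t + w' t * exp (-a*t)) (at t)"
    by (rule DERIV_mult[OF _ w'[OF t]]) (auto intro!: derivative_eq_intros)
  moreover have "exp (-a*t) * (-a) * w t + w' t * exp (-a*t) = exp (-a*t) * (w' t - a * w t)"
    by (simp add: algebra_simps)
  moreover have "exp (-a*t) * (w' t - a * w t) \<le> 0"
    using le[OF t] by (simp add: mult_nonneg_nonpos)
  ultimately show "\<exists>D. ((\<lambda>t. exp (-a*t) * w t) has_real_derivative D) (at t) \<and> D \<le> 0"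
    by auto
qed

lemma gronwall_bounded_nonneg:
  fixes a z B :: real
  assumes a: "a > 0"
    and w': "\<And>t. z \<le> t \<Longrightarrow> (w has_real_derivative w' t) (at t)"
    and le: "\<And>t. z \<le> t \<Longrightarrow> w' t \<le> a * w t"
    and bounded: "\<And>t. z \<le> t \<Longrightarrow> \<bar>w t\<bar> \<le> B"
  shows "0 \<le> w z"
proof -
  have lim: "((\<lambda>t. - B * exp (-a*t)) \<longlongrightarrow> 0) at_top"
    using a by real_asymp
  have below: "\<forall>\<^sub>F t in at_top. - B * exp (-a*t) \<le> exp (-a*z) * w z"
    using eventually_ge_at_top[of z]
  proof eventually_elim
    case (elim t)
    have "exp (-a*t) * (- B) \<le> exp (-a*t) * w t"
      using bounded[OF elim] by (intro mult_left_mono) auto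
    also have "\<dots> \<le> exp (-a*z) * w z"
      by (rule gronwall_antimono[OF elim w' le]) auto
    finally show ?case by (simp add: mult.commute)
  qed
  have "0 \<le> exp (-a*z) * w z"
    using tendsto_le[OF trivial_limit_at_top_linorder tendsto_const lim below] .
  then show ?thesis by (simp add: zero_le_mult_iff)
qed

lemma exp_le_quadratic:
  fixes e l y :: real
  assumes e: "e > 0" and l: "\<bar>l\<bar> \<le> e/2"
  shows "exp (l*y) \<le> 1 + l*y + l^2 * (4/e^2) * (exp (e*y) + exp (-(e*y)))"
proof -
  obtain t where t: "\<bar>t\<bar> \<le> \<bar>l*y\<bar>"
    and Taylor: "exp (l*y) = (\<Sum>m<2. (l*y)^m / fact m) + exp t / fact 2 * (l*y)^2"
    using Maclaurin_exp_le[of "l*y" 2] by blast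
  define a where "a = e * \<bar>y\<bar> / 2"
  have a0: "a \<ge> 0" using e by (simp add: a_def)
  have "\<bar>l*y\<bar> \<le> (e/2) * \<bar>y\<bar>" unfolding abs_mult using l by (intro mult_right_mono) auto
  then have "exp t \<le> exp a" using t unfolding a_def by simp
  have quad: "a^2 / 2 \<le> exp a" using exp_lower_Taylor_quadratic[OF a0] a0 by linarith
  have y2: "y^2 = 4 * a^2 / e^2" using e unfolding a_def by (simp add: field_simps power2_eq_square)
  have "exp t / 2 * (l*y)^2 \<le> exp a / 2 * (l^2 * y^2)"
    using \<open>exp t \<le> exp a\<close> by (simp add: power_mult_distrib mult_right_mono)
  also have "\<dots> = l^2 * (2/e^2) * (exp a * a^2)" using y2 by (simp add: field_simps)
  also have "\<dots> \<le> l^2 * (2/e^2) * (exp a * (2 * exp a))"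
    using quad e by (intro mult_left_mono) auto
  also have "\<dots> = l^2 * (4/e^2) * exp (e * \<bar>y\<bar>)"
    unfolding a_def by (simp add: exp_add[symmetric] field_simps)
  also have "\<dots> \<le> l^2 * (4/e^2) * (exp (e*y) + exp (-(e*y)))"
    by (intro mult_left_mono) (auto simp: abs_if add_increasing add_increasing2)
  finally show ?thesis using Taylor by (simp add: numeral_2_eq_2)
qed

lemma borel_measurable_lebesgue_continuous:
  "continuous_on UNIV (g :: real \<Rightarrow> real) \<Longrightarrow> g \<in> borel_measurable lebesgue"
  using borel_measurable_continuous_onI[of g] by (intro measurable_completion) simp

lemma continuous_on_limit_of_lipschitz:
  fixes f :: "nat \<Rightarrow> real \<Rightarrow> real"
  assumes lim: "\<And>x. (\<lambda>n. f n x) \<longlonglongrightarrow> g x"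
    and lip: "\<And>n x y. \<bar>f n x - f n y\<bar> \<le> L * \<bar>x - y\<bar>" and L: "0 \<le> L"
  shows "continuous_on UNIV g"
proof -
  have "\<bar>g x - g y\<bar> \<le> L * \<bar>x - y\<bar>" for x y
    by (rule LIMSEQ_le_const2[OF tendsto_rabs[OF tendsto_diff[OF lim lim]]]) (use lip in auto)
  then have "L-lipschitz_on UNIV g"
    using L by (intro lipschitz_onI) (auto simp: dist_real_def)
  then show ?thesis by (rule lipschitz_on_continuous_on)
qed

lemma bounded_below_if_tendsto_at_bot_at_top:
  fixes f :: "real \<Rightarrow> real"
  assumes "continuous_on UNIV f" "(f \<longlongrightarrow> L1) at_bot" "(f \<longlongrightarrow> L2) at_top"
  obtains A where "\<And>z. A \<le> f z"
proof -
  obtain a where a: "\<And>z. z \<le> a \<Longrightarrow> L1 - 1 < f z"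
    using order_tendstoD(1)[OF assms(2), of "L1 - 1"] by (auto simp: eventually_at_bot_linorder)
  obtain b where b: "\<And>z. b \<le> z \<Longrightarrow> L2 - 1 < f z"
    using order_tendstoD(1)[OF assms(3), of "L2 - 1"] by (auto simp: eventually_at_top_linorder)
  have "bdd_below (f ` {a..b})"
    by (intro bounded_imp_bdd_below compact_imp_bounded compact_continuous_image continuous_on_subset[OF assms(1)]) auto
  then obtain m where m: "\<forall>z\<in>{a..b}. m \<le> f z" unfolding bdd_below_def by auto
  show thesis
  proof
    fix z show "min m (min (L1 - 1) (L2 - 1)) \<le> f z"
      using a[of z] b[of z] m by (cases "z \<le> a"; cases "b \<le> z") (auto simp: min.coboundedI1 min.coboundedI2)
  qed
qed

lemma integrable_mult_exp_if_expmom_finite: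
  assumes "J \<in> borel_measurable lebesgue" "\<And>y. 0 \<le> J y" "expmom J l < \<infinity>"
  shows "integrable lebesgue (\<lambda>y. J y * exp (l*y))"
  unfolding integrable_iff_bounded
proof
  show "(\<lambda>y. J y * exp (l*y)) \<in> borel_measurable lebesgue"
    by (intro borel_measurable_times[OF assms(1)] borel_measurable_lebesgue_continuous continuous_intros)
  have "(\<integral>\<^sup>+ y. ennreal (norm (J y * exp (l*y))) \<partial>lebesgue) = expmom J l"
    unfolding expmom_def using assms(2) by (intro nn_integral_cong) (simp add: abs_mult)
  then show "(\<integral>\<^sup>+ y. ennreal (norm (J y * exp (l*y))) \<partial>lebesgue) < \<infinity>"
    using assms(3) by simp
qed

section \<open>Kernels with finite exponential moments\<close>

locale dispersal_kernel =
  fixes J :: "real \<Rightarrow> real" and e0 :: real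
  assumes J_nonneg: "\<And>y. 0 \<le> J y" and e0_pos: "0 < e0"
    and integrable_J_exp: "\<And>l. \<bar>l\<bar> \<le> e0 \<Longrightarrow> integrable lebesgue (\<lambda>y. J y * exp (l*y))"
    and J_mass: "integral\<^sup>L lebesgue J = 1"
    and J_mean: "integral\<^sup>L lebesgue (\<lambda>y. J y * y) = 0"
begin

lemma integrable_J: "integrable lebesgue J"
  using integrable_J_exp[of 0] e0_pos by simp

lemma integrable_J_mult_id: "integrable lebesgue (\<lambda>y. J y * y)"
proof (rule Bochner_Integration.integrable_bound)
  show "integrable lebesgue (\<lambda>y. (1/e0) * (J y * exp (e0*y) + J y * exp ((-e0)*y)))"
    using integrable_J_exp[of e0] integrable_J_exp[of "-e0"] e0_pos by auto
  show "(\<lambda>y. J y * y) \<in> borel_measurable lebesgue"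
    using borel_measurable_integrable[OF integrable_J] borel_measurable_lebesgue_continuous[of "\<lambda>y. y"]
    by (intro borel_measurable_times) auto
  show "AE y in lebesgue. norm (J y * y) \<le> norm ((1/e0) * (J y * exp (e0*y) + J y * exp ((-e0)*y)))"
  proof (intro AE_I2)
    fix y
    have "e0 * \<bar>y\<bar> \<le> exp (e0 * \<bar>y\<bar>)"
      using exp_ge_add_one_self[of "e0 * \<bar>y\<bar>"] by linarith
    also have "\<dots> \<le> exp (e0*y) + exp ((-e0)*y)"
      by (cases "y \<ge> 0") (auto simp: abs_if add_increasing add_increasing2)
    finally have "J y * \<bar>y\<bar> \<le> J y * ((1/e0) * (exp (e0*y) + exp ((-e0)*y)))"
      using J_nonneg[of y] e0_pos by (intro mult_left_mono) (auto simp: field_simps)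
    then show "norm (J y * y) \<le> norm ((1/e0) * (J y * exp (e0*y) + J y * exp ((-e0)*y)))"
      using J_nonneg[of y] e0_pos by (simp add: abs_mult algebra_simps)
  qed
qed

definition mgf :: "real \<Rightarrow> real" where
  "mgf l = (\<integral>y. J y * exp (l*y) \<partial>lebesgue)"

lemma mgf_le_quadratic: "\<exists>K\<ge>0. \<forall>l. \<bar>l\<bar> \<le> e0/2 \<longrightarrow> mgf l \<le> 1 + l^2 * K"
proof (intro exI conjI allI impI)
  define K where "K = (4/e0^2) * (mgf e0 + mgf (-e0))"
  have int_pm: "integrable lebesgue (\<lambda>y. J y * exp (e0*y))" "integrable lebesgue (\<lambda>y. J y * exp ((-e0)*y))"
    using integrable_J_exp[of e0] integrable_J_exp[of "-e0"] e0_pos by auto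
  have "0 \<le> mgf e0 + mgf (-e0)"
    unfolding mgf_def using J_nonneg by (intro add_nonneg_nonneg integral_nonneg_AE AE_I2) auto
  then show "0 \<le> K" unfolding K_def by simp
  fix l :: real assume l: "\<bar>l\<bar> \<le> e0/2"
  let ?C = "l^2 * (4/e0^2)"
  have int_bound: "integrable lebesgue (\<lambda>y. J y + l * (J y * y) + ?C * (J y * exp (e0*y) + J y * exp ((-e0)*y)))"
    using int_pm integrable_J integrable_J_mult_id by auto
  have "mgf l \<le> (\<integral>y. J y + l * (J y * y) + ?C * (J y * exp (e0*y) + J y * exp ((-e0)*y)) \<partial>lebesgue)"
    unfolding mgf_def
  proof (rule integral_mono[OF integrable_J_exp int_bound])
    show "\<bar>l\<bar> \<le> e0" using l e0_pos by simp
    fix y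
    have "J y * exp (l*y) \<le> J y * (1 + l*y + ?C * (exp (e0*y) + exp (-(e0*y))))"
      using exp_le_quadratic[OF e0_pos l, of y] J_nonneg[of y] by (intro mult_left_mono) auto
    then show "J y * exp (l*y) \<le> J y + l * (J y * y) + ?C * (J y * exp (e0*y) + J y * exp ((-e0)*y))"
      by (simp add: algebra_simps)
  qed
  also have "\<dots> = 1 + l^2 * K"
    \<comment> \<open>the linear term vanishes by (J2)\<close>
    using int_pm integrable_J integrable_J_mult_id J_mass J_mean
    by (simp add: K_def mgf_def Bochner_Integration.integral_add Bochner_Integration.integral_mult_right)
  finally show "mgf l \<le> 1 + l^2 * K" .
qed

lemma mgf_sub_one_le_linear:
  assumes a: "a > 0"
  obtains l0 where "0 < l0" "l0 \<le> e0" "\<And>l. \<bar>l\<bar> \<le> l0 \<Longrightarrow> mgf l - 1 \<le> a * \<bar>l\<bar>"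
proof -
  obtain K where K: "0 \<le> K" "\<And>l. \<bar>l\<bar> \<le> e0/2 \<Longrightarrow> mgf l \<le> 1 + l^2 * K"
    using mgf_le_quadratic by blast
  define l0 where "l0 = min (e0/2) (a/(K+1))"
  show thesis
  proof
    show "0 < l0" "l0 \<le> e0" using a K(1) e0_pos by (auto simp: l0_def)
    fix l assume l: "\<bar>l\<bar> \<le> l0"
    have "l^2 * K = \<bar>l\<bar> * (\<bar>l\<bar> * K)" by (simp add: power2_eq_square)
    also have "\<dots> \<le> \<bar>l\<bar> * (a/(K+1) * K)"
      using l K(1) by (intro mult_left_mono mult_right_mono) (auto simp: l0_def)
    also have "\<dots> \<le> \<bar>l\<bar> * a"
      using a K(1) by (intro mult_left_mono) (auto simp: field_simps)
    finally show "mgf l - 1 \<le> a * \<bar>l\<bar>"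
      using K(2)[of l] l by (simp add: l0_def mult.commute)
  qed
qed

definition conv :: "(real \<Rightarrow> real) \<Rightarrow> real \<Rightarrow> real" where
  "conv \<phi> t = (\<integral>y. J y * \<phi> (t - y) \<partial>lebesgue)"

lemma borel_measurable_J_mult_shift:
  assumes "continuous_on UNIV \<phi>"
  shows "(\<lambda>y. J y * \<phi> (t - y)) \<in> borel_measurable lebesgue"
proof -
  have "continuous_on UNIV (\<lambda>y. \<phi> (t - y))"
    by (rule continuous_on_compose2[OF assms]) (auto intro!: continuous_intros)
  then show ?thesis
    using borel_measurable_integrable[OF integrable_J]
    by (intro borel_measurable_times[OF _ borel_measurable_lebesgue_continuous])
qed

lemma J_mult_shift_bound:
  assumes "\<And>x. \<bar>\<phi> x\<bar> \<le> B" shows "norm (J y * \<phi> (t - y)) \<le> B * J y"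
  using mult_left_mono[OF assms[of "t - y"] J_nonneg[of y]] J_nonneg[of y]
  by (simp add: abs_mult mult.commute)

lemma integrable_J_mult_shift:
  assumes "continuous_on UNIV \<phi>" and "\<And>x. \<bar>\<phi> x\<bar> \<le> B"
  shows "integrable lebesgue (\<lambda>y. J y * \<phi> (t - y))"
proof (rule Bochner_Integration.integrable_bound)
  show "integrable lebesgue (\<lambda>y. B * J y)" using integrable_J by simp
  show "(\<lambda>y. J y * \<phi> (t - y)) \<in> borel_measurable lebesgue"
    by (rule borel_measurable_J_mult_shift[OF assms(1)])
  show "AE y in lebesgue. norm (J y * \<phi> (t - y)) \<le> norm (B * J y)"
    by (intro AE_I2 order_trans[OF J_mult_shift_bound[OF assms(2)]]) simp
qed

lemma conv_mono:
  assumes "continuous_on UNIV \<phi>1" "\<And>x. \<bar>\<phi>1 x\<bar> \<le> B1"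
    and "continuous_on UNIV \<phi>2" "\<And>x. \<bar>\<phi>2 x\<bar> \<le> B2"
    and le: "\<And>x. \<phi>1 x \<le> \<phi>2 x"
  shows "conv \<phi>1 t \<le> conv \<phi>2 t"
  unfolding conv_def
proof (rule integral_mono[OF integrable_J_mult_shift[OF assms(1,2)] integrable_J_mult_shift[OF assms(3,4)]])
  show "J y * \<phi>1 (t - y) \<le> J y * \<phi>2 (t - y)" for y
    using mult_left_mono[OF le J_nonneg] .
qed

lemma conv_const: "conv (\<lambda>_. a) t = a"
  unfolding conv_def using J_mass by simp

lemma conv_tendsto:
  assumes "\<And>n. continuous_on UNIV (\<phi>s n)" and B: "\<And>n x. \<bar>\<phi>s n x\<bar> \<le> B"
    and "continuous_on UNIV \<phi>" and lim: "\<And>x. (\<lambda>n. \<phi>s n x) \<longlonglongrightarrow> \<phi> x"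
  shows "(\<lambda>n. conv (\<phi>s n) t) \<longlonglongrightarrow> conv \<phi> t"
  unfolding conv_def
proof (rule integral_dominated_convergence[where w="\<lambda>y. B * J y"])
  show "AE y in lebesgue. (\<lambda>n. J y * \<phi>s n (t - y)) \<longlonglongrightarrow> J y * \<phi> (t - y)"
    by (intro AE_I2 tendsto_intros lim)
  show "AE y in lebesgue. norm (J y * \<phi>s n (t - y)) \<le> B * J y" for n
    by (intro AE_I2 J_mult_shift_bound) (rule B)
qed (use integrable_J borel_measurable_J_mult_shift assms in auto)

lemma continuous_on_conv:
  assumes cont: "continuous_on UNIV \<phi>" and B: "\<And>x. \<bar>\<phi> x\<bar> \<le> B"
  shows "continuous_on UNIV (conv \<phi>)"
proof -
  have "(\<lambda>n. conv \<phi> (xs n)) \<longlonglongrightarrow> conv \<phi> t" if xs: "xs \<longlonglongrightarrow> t" for xs t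
  proof -
    define \<phi>s where "\<phi>s n x = \<phi> (x + (xs n - t))" for n x
    have "(\<lambda>n. conv (\<phi>s n) t) \<longlonglongrightarrow> conv \<phi> t"
    proof (rule conv_tendsto[OF _ _ cont])
      show "continuous_on UNIV (\<phi>s n)" for n
        unfolding \<phi>s_def by (intro continuous_on_compose2[OF cont]) (auto intro!: continuous_intros)
      show "\<bar>\<phi>s n x\<bar> \<le> B" for n x unfolding \<phi>s_def by (rule B)
      show "(\<lambda>n. \<phi>s n x) \<longlonglongrightarrow> \<phi> x" for x
      proof -
        have "(\<lambda>n. x + (xs n - t)) \<longlonglongrightarrow> x"
          using tendsto_add[OF tendsto_const[of x] tendsto_diff[OF xs tendsto_const[of t]]] by simp
        moreover have "isCont \<phi> x" using cont by (simp add: continuous_on_eq_continuous_at)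
        ultimately show ?thesis unfolding \<phi>s_def by (rule isCont_tendsto_compose[rotated])
      qed
    qed
    moreover have "conv (\<phi>s n) t = conv \<phi> (xs n)" for n
    proof -
      have "\<And>y. t - y + (xs n - t) = xs n - y" by simp
      then show ?thesis by (simp add: conv_def \<phi>s_def)
    qed
    ultimately show ?thesis by simp
  qed
  then have "isCont (conv \<phi>) t" for t by (simp add: continuous_at_sequentially comp_def)
  then show ?thesis by (simp add: continuous_on_eq_continuous_at)
qed

lemma integrable_J_mult_shift_exp:
  "\<bar>l\<bar> \<le> e0 \<Longrightarrow> integrable lebesgue (\<lambda>y. J y * exp (l*(t-y)))"
proof -
  have "exp (l*(t-y)) = exp (l*t) * exp ((-l)*y)" for y
    by (simp add: right_diff_distrib exp_diff exp_minus field_simps)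
  then show "\<bar>l\<bar> \<le> e0 \<Longrightarrow> ?thesis"
    using integrable_mult_right[OF integrable_J_exp[of "-l"], of "exp (l*t)"] by (simp add: algebra_simps)
qed

lemma conv_exp: "conv (\<lambda>x. exp (l*x)) t = exp (l*t) * mgf (-l)"
proof -
  have "conv (\<lambda>x. exp (l*x)) t = (\<integral>y. exp (l*t) * (J y * exp ((-l)*y)) \<partial>lebesgue)"
    unfolding conv_def
    by (intro Bochner_Integration.integral_cong) (simp_all add: right_diff_distrib exp_diff exp_minus field_simps)
  then show ?thesis by (simp add: mgf_def)
qed

lemma conv_le_exp:
  assumes "continuous_on UNIV \<phi>" "\<And>x. \<bar>\<phi> x\<bar> \<le> B" "\<bar>l\<bar> \<le> e0"
    and le: "\<And>x. \<phi> x \<le> c * exp (l*x)"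
  shows "conv \<phi> t \<le> c * exp (l*t) * mgf (-l)"
proof -
  have "conv \<phi> t \<le> (\<integral>y. c * (J y * exp (l*(t-y))) \<partial>lebesgue)"
    unfolding conv_def
  proof (rule integral_mono[OF integrable_J_mult_shift[OF assms(1,2)]])
    show "integrable lebesgue (\<lambda>y. c * (J y * exp (l*(t-y))))"
      using integrable_J_mult_shift_exp[OF assms(3)] by simp
    show "J y * \<phi> (t - y) \<le> c * (J y * exp (l*(t-y)))" for y
      using mult_left_mono[OF le[of "t - y"] J_nonneg[of y]] by (simp add: algebra_simps)
  qed
  also have "\<dots> = c * conv (\<lambda>x. exp (l*x)) t" by (simp add: conv_def)
  finally show ?thesis by (simp add: conv_exp)
qed

lemma conv_ge_sub_exp:
  assumes "continuous_on UNIV \<phi>" "\<And>x. \<bar>\<phi> x\<bar> \<le> B" "\<bar>l\<bar> \<le> e0"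
    and ge: "\<And>x. a - c * exp (l*x) \<le> \<phi> x"
  shows "a - c * exp (l*t) * mgf (-l) \<le> conv \<phi> t"
proof -
  have int_exp: "integrable lebesgue (\<lambda>y. c * (J y * exp (l*(t-y))))"
    using integrable_J_mult_shift_exp[OF assms(3)] by simp
  have "(\<integral>y. a * J y - c * (J y * exp (l*(t-y))) \<partial>lebesgue) \<le> conv \<phi> t"
    unfolding conv_def
  proof (rule integral_mono[OF _ integrable_J_mult_shift[OF assms(1,2)]])
    show "integrable lebesgue (\<lambda>y. a * J y - c * (J y * exp (l*(t-y))))"
      using integrable_J int_exp by simp
    show "a * J y - c * (J y * exp (l*(t-y))) \<le> J y * \<phi> (t - y)" for y
      using mult_left_mono[OF ge[of "t - y"] J_nonneg[of y]] by (simp add: algebra_simps)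
  qed
  moreover have "(\<integral>y. a * J y - c * (J y * exp (l*(t-y))) \<partial>lebesgue) = a - c * conv (\<lambda>x. exp (l*x)) t"
    using integrable_J int_exp J_mass by (simp add: conv_def)
  ultimately show ?thesis by (simp add: conv_exp)
qed

end

section \<open>The monotone integral operator\<close>

locale wave_operator = dispersal_kernel +
  fixes s d r \<beta> \<alpha>p :: real and \<alpha> :: "real \<Rightarrow> real"
  assumes s_pos: "0 < s" and d_pos: "0 < d" and r_pos: "0 < r"
    and \<alpha>_cont: "continuous_on UNIV \<alpha>" and \<alpha>_le: "\<And>z. \<alpha> z \<le> \<alpha>p" and \<alpha>p_pos: "0 < \<alpha>p"
    and \<beta>_large: "\<And>z. 2 * r * \<alpha>p \<le> r * \<alpha> z + \<beta> - d"
begin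

lemma \<beta>_pos: "0 < \<beta>"
proof -
  have "r * \<alpha> 0 \<le> r * \<alpha>p" using \<alpha>_le r_pos by simp
  then show ?thesis using \<beta>_large[of 0] d_pos mult_pos_pos[OF r_pos \<alpha>p_pos] by linarith
qed

definition admissible :: "(real \<Rightarrow> real) \<Rightarrow> bool" where
  "admissible \<phi> \<longleftrightarrow> continuous_on UNIV \<phi> \<and> (\<forall>t. 0 \<le> \<phi> t \<and> \<phi> t \<le> \<alpha>p)"

definition forcing :: "(real \<Rightarrow> real) \<Rightarrow> real \<Rightarrow> real" where
  "forcing \<phi> t = d * conv \<phi> t + \<phi> t * (r * \<alpha> t - r * \<phi> t + \<beta> - d)"

definition wave_op :: "(real \<Rightarrow> real) \<Rightarrow> real \<Rightarrow> real" where
  "wave_op \<phi> z = exp_tail (\<beta>/s) (forcing \<phi>) z / s"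

lemma admissibleD:
  assumes "admissible \<phi>"
  shows "continuous_on UNIV \<phi>" "0 \<le> \<phi> t" "\<phi> t \<le> \<alpha>p" "\<bar>\<phi> t\<bar> \<le> \<alpha>p"
  using assms by (auto simp: admissible_def)

lemma reaction_mono:
  assumes "0 \<le> u" "u \<le> v" "v \<le> \<alpha>p"
  shows "u * (r * \<alpha> t - r * u + \<beta> - d) \<le> v * (r * \<alpha> t - r * v + \<beta> - d)"
proof -
  have "r * (u + v) \<le> r * (2 * \<alpha>p)" using assms r_pos by (intro mult_left_mono) auto
  then have "0 \<le> (v - u) * (r * \<alpha> t + \<beta> - d - r * (u + v))"
    using assms \<beta>_large[of t] by (intro mult_nonneg_nonneg) auto
  then show ?thesis by (simp add: algebra_simps)
qed

lemma conv_bounds: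
  assumes "admissible \<phi>" shows "0 \<le> conv \<phi> t" "conv \<phi> t \<le> \<alpha>p"
proof -
  have "conv (\<lambda>_. 0) t \<le> conv \<phi> t"
    by (rule conv_mono[of _ 0 _ \<alpha>p]) (use admissibleD[OF assms] \<alpha>p_pos in auto)
  then show "0 \<le> conv \<phi> t" by (simp add: conv_const)
  have "conv \<phi> t \<le> conv (\<lambda>_. \<alpha>p) t"
    by (rule conv_mono[of _ \<alpha>p _ \<alpha>p]) (use admissibleD[OF assms] \<alpha>p_pos in auto)
  then show "conv \<phi> t \<le> \<alpha>p" by (simp add: conv_const)
qed

lemma forcing_bounds:
  assumes "admissible \<phi>" shows "0 \<le> forcing \<phi> t" "forcing \<phi> t \<le> \<beta> * \<alpha>p"
proof -
  note \<phi> = admissibleD[OF assms]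
  have "0 * (r * \<alpha> t - r * 0 + \<beta> - d) \<le> \<phi> t * (r * \<alpha> t - r * \<phi> t + \<beta> - d)"
    by (rule reaction_mono) (use \<phi> in auto)
  then show "0 \<le> forcing \<phi> t"
    unfolding forcing_def using conv_bounds[OF assms] d_pos by simp
  have "\<phi> t * (r * \<alpha> t - r * \<phi> t + \<beta> - d) \<le> \<alpha>p * (r * \<alpha> t - r * \<alpha>p + \<beta> - d)"
    by (rule reaction_mono) (use \<phi> in auto)
  also have "\<dots> \<le> \<alpha>p * (\<beta> - d)"
    using \<alpha>_le[of t] \<alpha>p_pos r_pos by (intro mult_left_mono) (auto simp: algebra_simps)
  moreover have "d * conv \<phi> t \<le> d * \<alpha>p" using conv_bounds(2)[OF assms, of t] d_pos by simp
  ultimately show "forcing \<phi> t \<le> \<beta> * \<alpha>p" unfolding forcing_def by (simp add: algebra_simps)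
qed

lemma forcing_mono:
  assumes "admissible \<phi>1" "admissible \<phi>2" and le: "\<And>x. \<phi>1 x \<le> \<phi>2 x"
  shows "forcing \<phi>1 t \<le> forcing \<phi>2 t"
proof -
  note \<phi>1 = admissibleD[OF assms(1)] and \<phi>2 = admissibleD[OF assms(2)]
  have "conv \<phi>1 t \<le> conv \<phi>2 t" by (rule conv_mono[of _ \<alpha>p _ \<alpha>p]) (use \<phi>1 \<phi>2 le in auto)
  moreover have "\<phi>1 t * (r * \<alpha> t - r * \<phi>1 t + \<beta> - d) \<le> \<phi>2 t * (r * \<alpha> t - r * \<phi>2 t + \<beta> - d)"
    by (rule reaction_mono) (use \<phi>1 \<phi>2 le in auto)
  ultimately show ?thesis unfolding forcing_def using d_pos by (simp add: add_mono)
qed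

lemma continuous_on_forcing: "admissible \<phi> \<Longrightarrow> continuous_on UNIV (forcing \<phi>)"
  unfolding forcing_def[abs_def]
  using continuous_on_conv admissibleD \<alpha>_cont by (intro continuous_intros) blast+

lemma forcing_abs_le: "admissible \<phi> \<Longrightarrow> \<bar>forcing \<phi> t\<bar> \<le> \<beta> * \<alpha>p"
  using forcing_bounds by (metis abs_of_nonneg)

lemma borel_measurable_forcing: "admissible \<phi> \<Longrightarrow> forcing \<phi> \<in> borel_measurable lborel"
  using borel_measurable_continuous_onI[OF continuous_on_forcing] by simp

lemma wave_op_has_derivative:
  assumes "admissible \<phi>"
  shows "(wave_op \<phi> has_real_derivative (\<beta> * wave_op \<phi> z - forcing \<phi> z) / s) (at z)"
proof -
  have "((\<lambda>z. exp_tail (\<beta>/s) (forcing \<phi>) z / s) has_real_derivative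
      (\<beta>/s * exp_tail (\<beta>/s) (forcing \<phi>) z - forcing \<phi> z) / s) (at z)"
    using s_pos \<beta>_pos
    by (intro DERIV_cdivide exp_tail_has_derivative[OF _ continuous_on_forcing[OF assms] forcing_abs_le[OF assms]])
      simp
  moreover have "\<beta>/s * exp_tail (\<beta>/s) (forcing \<phi>) z = \<beta> * wave_op \<phi> z"
    by (simp add: wave_op_def)
  ultimately show ?thesis by (simp add: wave_op_def[abs_def])
qed

lemma wave_op_bounds:
  assumes "admissible \<phi>" shows "0 \<le> wave_op \<phi> z" "wave_op \<phi> z \<le> \<alpha>p"
proof -
  have c: "0 < \<beta>/s" using \<beta>_pos s_pos by simp
  note bounds = exp_tail_bounds[OF c borel_measurable_forcing[OF assms] conjI[OF forcing_bounds[OF assms]]]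
  show "0 \<le> wave_op \<phi> z" using bounds(1) s_pos by (simp add: wave_op_def)
  show "wave_op \<phi> z \<le> \<alpha>p"
    using bounds(2)[of z] s_pos \<beta>_pos by (simp add: wave_op_def field_simps)
qed

lemma admissible_wave_op: "admissible \<phi> \<Longrightarrow> admissible (wave_op \<phi>)"
  unfolding admissible_def[of "wave_op \<phi>"]
  using wave_op_bounds wave_op_has_derivative
  by (auto intro!: continuous_at_imp_continuous_on DERIV_isCont)

lemma wave_op_mono:
  assumes "admissible \<phi>1" "admissible \<phi>2" and "\<And>x. \<phi>1 x \<le> \<phi>2 x"
  shows "wave_op \<phi>1 z \<le> wave_op \<phi>2 z"
proof -
  have "exp_tail (\<beta>/s) (forcing \<phi>1) z \<le> exp_tail (\<beta>/s) (forcing \<phi>2) z"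
    using \<beta>_pos s_pos forcing_mono[OF assms] forcing_abs_le[OF assms(1)] forcing_abs_le[OF assms(2)]
    by (intro exp_tail_mono[where K="\<beta> * \<alpha>p"] borel_measurable_forcing assms(1,2)) auto
  then show ?thesis using s_pos by (simp add: wave_op_def divide_right_mono)
qed

lemma wave_op_lipschitz:
  assumes "admissible \<phi>"
  shows "\<bar>wave_op \<phi> x - wave_op \<phi> y\<bar> \<le> \<beta> * \<alpha>p / s * \<bar>x - y\<bar>"
proof -
  have bound: "norm ((\<beta> * wave_op \<phi> z - forcing \<phi> z) / s) \<le> \<beta> * \<alpha>p / s" for z
  proof -
    have "0 \<le> \<beta> * wave_op \<phi> z" "\<beta> * wave_op \<phi> z \<le> \<beta> * \<alpha>p"
      using wave_op_bounds[OF assms, of z] \<beta>_pos by auto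
    then have "\<bar>\<beta> * wave_op \<phi> z - forcing \<phi> z\<bar> \<le> \<beta> * \<alpha>p"
      using forcing_bounds[OF assms, of z] by linarith
    then show ?thesis using s_pos by (simp add: divide_right_mono)
  qed
  from field_differentiable_bound[OF convex_UNIV wave_op_has_derivative[OF assms] bound]
  show ?thesis by simp
qed

lemma wave_op_tendsto:
  assumes "\<And>n. admissible (\<phi>s n)" "admissible \<phi>" and lim: "\<And>x. (\<lambda>n. \<phi>s n x) \<longlonglongrightarrow> \<phi> x"
  shows "(\<lambda>n. wave_op (\<phi>s n) z) \<longlonglongrightarrow> wave_op \<phi> z"
proof -
  have "(\<lambda>n. forcing (\<phi>s n) t) \<longlonglongrightarrow> forcing \<phi> t" for t
    unfolding forcing_def
    using admissibleD[OF assms(1)] admissibleD[OF assms(2)]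
    by (intro tendsto_intros lim conv_tendsto[of _ \<alpha>p]) auto
  then have "(\<lambda>n. exp_tail (\<beta>/s) (forcing (\<phi>s n)) z) \<longlonglongrightarrow> exp_tail (\<beta>/s) (forcing \<phi>) z"
    using \<beta>_pos s_pos forcing_abs_le[OF assms(1)]
    by (intro exp_tail_tendsto[where K="\<beta> * \<alpha>p"] borel_measurable_forcing assms(1,2)) auto
  then show ?thesis unfolding wave_op_def using s_pos by (intro tendsto_divide) auto
qed

lemma wave_op_iterates:
  assumes lo: "admissible lo" and up: "admissible up" and lo_le_up: "\<And>x. lo x \<le> up x"
    and lo_sub: "\<And>x. lo x \<le> wave_op lo x" and up_super: "\<And>x. wave_op up x \<le> up x"
  shows "admissible ((wave_op ^^ n) up)"
    and "lo x \<le> (wave_op ^^ n) up x"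
    and "(wave_op ^^ Suc n) up x \<le> (wave_op ^^ n) up x"
proof -
  show adm: "admissible ((wave_op ^^ n) up)" for n
    by (induction n) (simp_all add: up admissible_wave_op)
  show "lo x \<le> (wave_op ^^ n) up x"
  proof (induction n arbitrary: x)
    case (Suc n)
    have "lo x \<le> wave_op lo x" by (rule lo_sub)
    also have "\<dots> \<le> wave_op ((wave_op ^^ n) up) x" by (rule wave_op_mono[OF lo adm Suc.IH])
    finally show ?case by simp
  qed (simp add: lo_le_up)
  show "(wave_op ^^ Suc n) up x \<le> (wave_op ^^ n) up x"
  proof (induction n arbitrary: x)
    case (Suc n)
    show ?case using wave_op_mono[OF adm adm Suc.IH] by simp
  qed (simp add: up_super)
qed

lemma monotone_iteration:
  assumes "admissible lo" "admissible up" "\<And>x. lo x \<le> up x"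
    and "\<And>x. lo x \<le> wave_op lo x" "\<And>x. wave_op up x \<le> up x"
  obtains \<phi> where "admissible \<phi>" "wave_op \<phi> = \<phi>" "\<And>x. lo x \<le> \<phi> x" "\<And>x. \<phi> x \<le> up x"
proof -
  define \<phi>s where "\<phi>s n = (wave_op ^^ n) up" for n
  note iter = wave_op_iterates[OF assms, folded \<phi>s_def]
  define \<phi> where "\<phi> x = (INF n. \<phi>s n x)" for x
  have dec: "decseq (\<lambda>n. \<phi>s n x)" for x by (rule decseq_SucI) (rule iter(3))
  have "bdd_below (range (\<lambda>n. \<phi>s n x))" for x
    using admissibleD(2)[OF iter(1)] by (intro bdd_belowI[of _ 0]) auto
  then have lim: "(\<lambda>n. \<phi>s n x) \<longlonglongrightarrow> \<phi> x" for x
    unfolding \<phi>_def using LIMSEQ_decseq_INF dec by blast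
  have "continuous_on UNIV \<phi>"
  proof (rule continuous_on_limit_of_lipschitz)
    show "(\<lambda>n. \<phi>s (Suc n) x) \<longlonglongrightarrow> \<phi> x" for x using LIMSEQ_Suc[OF lim] .
    show "\<bar>\<phi>s (Suc n) x - \<phi>s (Suc n) y\<bar> \<le> \<beta> * \<alpha>p / s * \<bar>x - y\<bar>" for n x y
      using wave_op_lipschitz[OF iter(1)] by (simp add: \<phi>s_def)
    show "0 \<le> \<beta> * \<alpha>p / s" using \<beta>_pos \<alpha>p_pos s_pos by simp
  qed
  moreover have "0 \<le> \<phi> x" "\<phi> x \<le> \<alpha>p" for x
    using LIMSEQ_le_const[OF lim] LIMSEQ_le_const2[OF lim] admissibleD[OF iter(1)] by blast+
  ultimately have adm: "admissible \<phi>" by (simp add: admissible_def)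
  show thesis
  proof
    show "admissible \<phi>" by (rule adm)
    show "wave_op \<phi> = \<phi>"
    proof
      fix x
      have "(\<lambda>n. \<phi>s (Suc n) x) \<longlonglongrightarrow> wave_op \<phi> x"
        unfolding \<phi>s_def funpow.simps comp_def by (rule wave_op_tendsto[OF iter(1)[unfolded \<phi>s_def] adm lim[unfolded \<phi>s_def]])
      then show "wave_op \<phi> x = \<phi> x" using LIMSEQ_Suc[OF lim] LIMSEQ_unique by blast
    qed
    show "lo x \<le> \<phi> x" for x by (rule LIMSEQ_le_const[OF lim]) (use iter(2) in auto)
    show "\<phi> x \<le> up x" for x
      using LIMSEQ_le_const2[OF lim] decseqD[OF dec, of 0] by (auto simp: \<phi>s_def)
  qed
qed

lemma fixed_point_has_derivative:
  assumes "admissible \<phi>" "wave_op \<phi> = \<phi>"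
  shows "(\<phi> has_real_derivative (\<beta> * \<phi> z - forcing \<phi> z) / s) (at z)"
  using wave_op_has_derivative[OF assms(1), of z] unfolding assms(2) .

lemma fixed_point_solves:
  assumes "admissible \<phi>" "wave_op \<phi> = \<phi>"
  shows "- s * ((\<beta> * \<phi> z - forcing \<phi> z) / s)
    = d * ((\<integral>y. J y * \<phi> (z - y) \<partial>lebesgue) - \<phi> z) + r * \<phi> z * (\<alpha> z - \<phi> z)"
proof -
  have "- s * ((\<beta> * \<phi> z - forcing \<phi> z) / s) = forcing \<phi> z - \<beta> * \<phi> z"
    using s_pos by simp
  then show ?thesis by (simp add: forcing_def conv_def algebra_simps)
qed

lemma fixed_point_pos:
  assumes "admissible \<phi>" "wave_op \<phi> = \<phi>" and "z \<le> t" "0 < \<phi> t"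
  shows "0 < \<phi> z"
proof -
  have "exp (-(\<beta>/s)*t) * \<phi> t \<le> exp (-(\<beta>/s)*z) * \<phi> z"
  proof (rule gronwall_antimono[OF \<open>z \<le> t\<close> fixed_point_has_derivative[OF assms(1,2)]])
    fix x
    show "(\<beta> * \<phi> x - forcing \<phi> x) / s \<le> \<beta>/s * \<phi> x"
      using forcing_bounds(1)[OF assms(1), of x] s_pos by (simp add: divide_right_mono diff_divide_distrib)
  qed
  moreover have "0 < exp (-(\<beta>/s)*t) * \<phi> t" using \<open>0 < \<phi> t\<close> by simp
  ultimately have "0 < exp (-(\<beta>/s)*z) * \<phi> z" by linarith
  then show ?thesis by (simp add: zero_less_mult_iff)
qed

section \<open>Super- and sub-solutions\<close>

definition upper_barrier :: "real \<Rightarrow> real \<Rightarrow> real \<Rightarrow> real" where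
  "upper_barrier \<mu> z0 t = min \<alpha>p (\<alpha>p * exp (\<mu>*(t - z0)))"

definition lower_barrier :: "real \<Rightarrow> real \<Rightarrow> real \<Rightarrow> real" where
  "lower_barrier B \<kappa> t = max 0 (\<alpha>p - B * exp (-\<kappa>*t))"

lemma admissible_upper_barrier: "admissible (upper_barrier \<mu> z0)"
  using \<alpha>p_pos unfolding admissible_def upper_barrier_def[abs_def]
  by (auto intro!: continuous_intros)

lemma admissible_lower_barrier: "0 \<le> B \<Longrightarrow> admissible (lower_barrier B \<kappa>)"
  using \<alpha>p_pos unfolding admissible_def lower_barrier_def[abs_def]
  by (auto intro!: continuous_intros)

lemma lower_barrier_le_upper_barrier:
  assumes "0 < \<mu>" "0 \<le> B" and "\<And>t. B * exp (-\<kappa>*t) < \<alpha>p \<Longrightarrow> z0 \<le> t"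
  shows "lower_barrier B \<kappa> t \<le> upper_barrier \<mu> z0 t"
proof (cases "B * exp (-\<kappa>*t) < \<alpha>p")
  case True
  then have "1 \<le> exp (\<mu>*(t - z0))" using assms by simp
  then have "upper_barrier \<mu> z0 t = \<alpha>p" using \<alpha>p_pos by (simp add: upper_barrier_def)
  then show ?thesis using \<alpha>p_pos \<open>0 \<le> B\<close> by (simp add: lower_barrier_def True)
qed (use \<alpha>p_pos in \<open>simp add: lower_barrier_def upper_barrier_def\<close>)

lemma upper_barrier_tendsto: "0 < \<mu> \<Longrightarrow> (upper_barrier \<mu> z0 \<longlongrightarrow> 0) at_bot"
proof -
  assume "0 < \<mu>"
  then have "((\<lambda>t. \<alpha>p * exp (\<mu>*(t - z0))) \<longlongrightarrow> 0) at_bot"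
    by (simp add: filterlim_at_bot_mirror) real_asymp
  from tendsto_min[OF tendsto_const[of \<alpha>p] this] show ?thesis
    using \<alpha>p_pos by (simp add: upper_barrier_def[abs_def])
qed

lemma lower_barrier_tendsto: "0 < \<kappa> \<Longrightarrow> (lower_barrier B \<kappa> \<longlongrightarrow> \<alpha>p) at_top"
proof -
  assume "0 < \<kappa>"
  then have "((\<lambda>t. \<alpha>p - B * exp (-\<kappa>*t)) \<longlongrightarrow> \<alpha>p) at_top" by real_asymp
  from tendsto_max[OF tendsto_const[of 0] this] show ?thesis
    using \<alpha>p_pos by (simp add: lower_barrier_def[abs_def])
qed

lemma lower_barrier_constant:
  assumes \<kappa>: "0 < \<kappa>" "\<kappa> \<le> \<rho>" and C: "0 < C"
    and rate: "\<And>z. T0 \<le> z \<Longrightarrow> \<alpha>p - \<alpha> z \<le> C * exp (-\<rho>*z)"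
  obtains B where "0 < B" "\<And>t. B * exp (-\<kappa>*t) < \<alpha>p \<Longrightarrow> z0 \<le> t \<and> \<alpha>p - \<alpha> t \<le> B * exp (-\<kappa>*t)"
proof
  define Z where "Z = max T0 (max 0 z0)"
  define B where "B = (C + \<alpha>p) * exp (\<kappa> * Z)"
  show "0 < B" using C \<alpha>p_pos by (simp add: B_def)
  fix t assume small: "B * exp (-\<kappa>*t) < \<alpha>p"
  have "Z < t"
  proof (rule ccontr)
    assume "\<not> Z < t"
    then have "1 \<le> exp (\<kappa> * (Z - t))" using \<kappa> by simp
    then have "C + \<alpha>p \<le> (C + \<alpha>p) * exp (\<kappa> * (Z - t))" using C \<alpha>p_pos by simp
    also have "\<dots> = B * exp (-\<kappa>*t)" by (simp add: B_def exp_add[symmetric] algebra_simps)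
    finally show False using small C by linarith
  qed
  then have t: "T0 \<le> t" "0 \<le> t" "z0 \<le> t" by (auto simp: Z_def)
  have "1 \<le> exp (\<kappa> * Z)" using \<kappa> by (simp add: Z_def)
  then have "(C + \<alpha>p) * 1 \<le> B" unfolding B_def using C \<alpha>p_pos by (intro mult_left_mono) auto
  then have "C + \<alpha>p \<le> B" by simp
  then have "C \<le> B" using \<alpha>p_pos by linarith
  have "\<alpha>p - \<alpha> t \<le> C * exp (-\<rho>*t)" by (rule rate[OF t(1)])
  also have "\<dots> \<le> C * exp (-\<kappa>*t)" using C \<kappa> t(2) by (simp add: mult_right_mono)
  also have "\<dots> \<le> B * exp (-\<kappa>*t)" using \<open>C \<le> B\<close> by simp
  finally show "z0 \<le> t \<and> \<alpha>p - \<alpha> t \<le> B * exp (-\<kappa>*t)" using t(3) by simp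
qed

lemma forcing_upper_barrier:
  assumes \<mu>: "\<bar>\<mu>\<bar> \<le> e0" and t: "s*\<mu> + d * (mgf (-\<mu>) - 1) + r * \<alpha> t \<le> 0"
  shows "forcing (upper_barrier \<mu> z0) t \<le> (\<beta> - s*\<mu>) * (\<alpha>p * exp (\<mu>*(t - z0)))"
proof -
  let ?\<psi> = "upper_barrier \<mu> z0" and ?E = "\<lambda>t. \<alpha>p * exp (\<mu>*(t - z0))"
  note \<psi> = admissibleD[OF admissible_upper_barrier]
  have E: "?E x = (\<alpha>p * exp (-\<mu>*z0)) * exp (\<mu>*x)" for x
    by (simp add: exp_add[symmetric] algebra_simps)
  have "conv ?\<psi> t \<le> (\<alpha>p * exp (-\<mu>*z0)) * exp (\<mu>*t) * mgf (-\<mu>)"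
  proof (rule conv_le_exp[OF \<psi>(1) \<psi>(4) \<mu>])
    show "?\<psi> x \<le> (\<alpha>p * exp (-\<mu>*z0)) * exp (\<mu>*x)" for x
      unfolding E[symmetric] upper_barrier_def by simp
  qed
  then have conv: "d * conv ?\<psi> t \<le> d * (?E t * mgf (-\<mu>))"
    using d_pos by (simp add: E)
  have "0 \<le> r * \<alpha> t + \<beta> - d" using \<beta>_large[of t] r_pos \<alpha>p_pos by (smt (verit) mult_pos_pos)
  then have "?\<psi> t * (r * \<alpha> t - r * ?\<psi> t + \<beta> - d) \<le> ?E t * (r * \<alpha> t + \<beta> - d)"
    using \<psi>(2)[of t] r_pos
    by (intro order_trans[OF mult_left_mono mult_right_mono])
      (auto simp: upper_barrier_def)
  moreover have "d * (mgf (-\<mu>)) + (r * \<alpha> t + \<beta> - d) \<le> \<beta> - s*\<mu>"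
    using t by (simp add: algebra_simps)
  then have "?E t * (d * (mgf (-\<mu>)) + (r * \<alpha> t + \<beta> - d)) \<le> ?E t * (\<beta> - s*\<mu>)"
    using \<alpha>p_pos by (intro mult_left_mono) auto
  ultimately show ?thesis using conv unfolding forcing_def by (simp add: algebra_simps)
qed

lemma wave_op_upper_barrier:
  assumes \<mu>: "0 < \<mu>" "\<mu> \<le> e0"
    and \<mu>_small: "\<And>t. t \<le> z0 \<Longrightarrow> s*\<mu> + d * (mgf (-\<mu>) - 1) + r * \<alpha> t \<le> 0"
  shows "wave_op (upper_barrier \<mu> z0) z \<le> upper_barrier \<mu> z0 z"
proof -
  let ?\<psi> = "upper_barrier \<mu> z0" and ?E = "\<lambda>t. \<alpha>p * exp (\<mu>*(t - z0))"
  have le_\<alpha>p: "wave_op ?\<psi> t \<le> \<alpha>p" for t by (rule wave_op_bounds(2)[OF admissible_upper_barrier])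
  have "wave_op ?\<psi> z \<le> ?E z"
  proof (cases "z \<le> z0")
    case True
    let ?w = "\<lambda>t. ?E t - wave_op ?\<psi> t"
    have "exp (-(\<beta>/s)*z0) * ?w z0 \<le> exp (-(\<beta>/s)*z) * ?w z"
    proof (rule gronwall_antimono[OF True])
      fix t assume t: "z \<le> t" "t \<le> z0"
      have "(?E has_real_derivative \<mu> * ?E t) (at t)" by (auto intro!: derivative_eq_intros)
      from DERIV_diff[OF this wave_op_has_derivative[OF admissible_upper_barrier]]
      show "(?w has_real_derivative (\<mu> * ?E t - (\<beta> * wave_op ?\<psi> t - forcing ?\<psi> t) / s)) (at t)" .
      have "forcing ?\<psi> t \<le> (\<beta> - s*\<mu>) * ?E t"
        using \<mu> \<mu>_small[OF t(2)] by (intro forcing_upper_barrier) auto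
      then have "s * \<mu> * ?E t - (\<beta> * wave_op ?\<psi> t - forcing ?\<psi> t) \<le> \<beta> * ?w t"
        by (simp add: algebra_simps)
      from divide_right_mono[OF this, of s]
      show "\<mu> * ?E t - (\<beta> * wave_op ?\<psi> t - forcing ?\<psi> t) / s \<le> \<beta>/s * ?w t"
        using s_pos by (simp add: diff_divide_distrib)
    qed
    moreover have "0 \<le> exp (-(\<beta>/s)*z0) * ?w z0" using le_\<alpha>p[of z0] by simp
    ultimately have "0 \<le> exp (-(\<beta>/s)*z) * ?w z" by linarith
    then show ?thesis by (simp add: zero_le_mult_iff)
  next
    case False
    then have "\<alpha>p \<le> ?E z" using \<alpha>p_pos \<mu>(1) by simp
    then show ?thesis using le_\<alpha>p[of z] by simp
  qed
  then show ?thesis using le_\<alpha>p[of z] by (simp add: upper_barrier_def)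
qed

lemma forcing_lower_barrier:
  assumes \<kappa>: "0 \<le> \<kappa>" "\<kappa> \<le> e0" and B: "0 \<le> B"
    and \<kappa>_small: "d * (mgf \<kappa> - 1) \<le> s * \<kappa>"
    and t: "B * exp (-\<kappa>*t) < \<alpha>p" and close: "\<alpha>p - \<alpha> t \<le> B * exp (-\<kappa>*t)"
  shows "\<beta> * (\<alpha>p - B * exp (-\<kappa>*t)) - s * \<kappa> * (B * exp (-\<kappa>*t)) \<le> forcing (lower_barrier B \<kappa>) t"
proof -
  let ?\<psi> = "lower_barrier B \<kappa>"
  define w where "w = B * exp (-\<kappa>*t)"
  define u where "u = \<alpha>p - w"
  note \<psi> = admissibleD[OF admissible_lower_barrier[OF B]]
  have w0: "0 \<le> w" using B by (simp add: w_def)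
  have u: "?\<psi> t = u" "0 < u" using t by (simp_all add: lower_barrier_def u_def w_def)
  have "\<alpha>p - B * exp ((-\<kappa>)*t) * mgf (-(-\<kappa>)) \<le> conv ?\<psi> t"
    by (rule conv_ge_sub_exp[OF \<psi>(1) \<psi>(4)]) (use \<kappa> in \<open>auto simp: lower_barrier_def\<close>)
  then have "d * (\<alpha>p - w * mgf \<kappa>) \<le> d * conv ?\<psi> t" using d_pos by (simp add: w_def)
  moreover have "d * w * (mgf \<kappa> - 1) \<le> s * \<kappa> * w"
    using mult_right_mono[OF \<kappa>_small w0] by (simp add: algebra_simps)
  moreover have "0 \<le> r * u * (\<alpha> t - u)" using r_pos u(2) close by (simp add: u_def w_def)
  moreover have "d * (\<alpha>p - w * mgf \<kappa>) + u * (r * \<alpha> t - r * u + \<beta> - d)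
      = \<beta> * u - d * w * (mgf \<kappa> - 1) + r * u * (\<alpha> t - u)"
    by (simp add: u_def algebra_simps)
  ultimately show ?thesis unfolding forcing_def u(1) w_def[symmetric] u_def[symmetric] by linarith
qed

lemma wave_op_lower_barrier:
  assumes \<kappa>: "0 < \<kappa>" "\<kappa> \<le> e0" and B: "0 \<le> B"
    and \<kappa>_small: "d * (mgf \<kappa> - 1) \<le> s * \<kappa>"
    and close: "\<And>t. B * exp (-\<kappa>*t) < \<alpha>p \<Longrightarrow> \<alpha>p - \<alpha> t \<le> B * exp (-\<kappa>*t)"
  shows "lower_barrier B \<kappa> z \<le> wave_op (lower_barrier B \<kappa>) z"
proof (cases "B * exp (-\<kappa>*z) < \<alpha>p")
  case True
  let ?\<psi> = "lower_barrier B \<kappa>"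
  let ?w = "\<lambda>t. wave_op ?\<psi> t - (\<alpha>p - B * exp (-\<kappa>*t))"
  note \<psi> = admissible_lower_barrier[OF B, of \<kappa>]
  have small: "B * exp (-\<kappa>*t) < \<alpha>p" if "z \<le> t" for t
  proof -
    have "B * exp (-\<kappa>*t) \<le> B * exp (-\<kappa>*z)" using that \<kappa>(1) B by (simp add: mult_left_mono)
    then show ?thesis using True by linarith
  qed
  have "0 \<le> ?w z"
  proof (rule gronwall_bounded_nonneg[where w="?w" and a="\<beta>/s" and B="2*\<alpha>p"])
    show "0 < \<beta>/s" using \<beta>_pos s_pos by simp
    fix t assume t: "z \<le> t"
    have "((\<lambda>t. \<alpha>p - B * exp (-\<kappa>*t)) has_real_derivative \<kappa> * (B * exp (-\<kappa>*t))) (at t)"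
      by (auto intro!: derivative_eq_intros)
    from DERIV_diff[OF wave_op_has_derivative[OF \<psi>] this]
    show "(?w has_real_derivative (\<beta> * wave_op ?\<psi> t - forcing ?\<psi> t) / s - \<kappa> * (B * exp (-\<kappa>*t))) (at t)" .
    have "\<beta> * (\<alpha>p - B * exp (-\<kappa>*t)) - s * \<kappa> * (B * exp (-\<kappa>*t)) \<le> forcing ?\<psi> t"
      using \<kappa> B \<kappa>_small small[OF t] close[OF small[OF t]] by (intro forcing_lower_barrier) auto
    then have "(\<beta> * wave_op ?\<psi> t - forcing ?\<psi> t) - s * \<kappa> * (B * exp (-\<kappa>*t)) \<le> \<beta> * ?w t"
      by (simp add: algebra_simps)
    from divide_right_mono[OF this, of s]
    show "(\<beta> * wave_op ?\<psi> t - forcing ?\<psi> t) / s - \<kappa> * (B * exp (-\<kappa>*t)) \<le> \<beta>/s * ?w t"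
      using s_pos by (simp add: diff_divide_distrib)
    show "\<bar>?w t\<bar> \<le> 2 * \<alpha>p"
      using wave_op_bounds[OF \<psi>, of t] small[OF t] mult_nonneg_nonneg[OF B exp_ge_zero[of "-\<kappa>*t"]]
      by (intro abs_leI) linarith+
  qed
  then show ?thesis using True by (simp add: lower_barrier_def)
next
  case False
  then show ?thesis using wave_op_bounds(1)[OF admissible_lower_barrier[OF B]] by (simp add: lower_barrier_def)
qed

section \<open>Existence of the travelling wave\<close>

lemma exists_upper_barrier_rate:
  assumes z0: "\<And>t. t \<le> z0 \<Longrightarrow> \<alpha> t < \<alpha>m/2" and \<alpha>m_neg: "\<alpha>m < 0"
  obtains \<mu> where "0 < \<mu>" "\<mu> \<le> e0" "\<And>t. t \<le> z0 \<Longrightarrow> s*\<mu> + d * (mgf (-\<mu>) - 1) + r * \<alpha> t \<le> 0"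
proof -
  define \<delta> where "\<delta> = - (r * \<alpha>m) / 2"
  have \<delta>: "0 < \<delta>" using r_pos \<alpha>m_neg by (simp add: \<delta>_def mult_pos_neg)
  obtain l0 where l0: "0 < l0" "l0 \<le> e0" "\<And>l. \<bar>l\<bar> \<le> l0 \<Longrightarrow> mgf l - 1 \<le> 1 * \<bar>l\<bar>"
    using mgf_sub_one_le_linear[of 1] by auto
  define \<mu> where "\<mu> = min l0 (\<delta> / (s + d))"
  show thesis
  proof
    show "0 < \<mu>" "\<mu> \<le> e0" using l0 \<delta> s_pos d_pos by (auto simp: \<mu>_def)
    fix t assume "t \<le> z0"
    have "mgf (-\<mu>) - 1 \<le> \<mu>" using l0(3)[of "-\<mu>"] \<open>0 < \<mu>\<close> by (simp add: \<mu>_def)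
    then have "d * (mgf (-\<mu>) - 1) \<le> d * \<mu>" using d_pos by simp
    moreover have "(s + d) * \<mu> \<le> \<delta>"
      using s_pos d_pos pos_le_divide_eq[of "s + d" \<mu> \<delta>] by (simp add: \<mu>_def mult.commute)
    moreover have "r * \<alpha> t \<le> - \<delta>" using z0[OF \<open>t \<le> z0\<close>] r_pos by (simp add: \<delta>_def)
    ultimately show "s*\<mu> + d * (mgf (-\<mu>) - 1) + r * \<alpha> t \<le> 0" by (simp add: algebra_simps)
  qed
qed

lemma exists_lower_barrier_rate:
  assumes "0 < \<rho>"
  obtains \<kappa> where "0 < \<kappa>" "\<kappa> \<le> e0" "\<kappa> \<le> \<rho>" "d * (mgf \<kappa> - 1) \<le> s * \<kappa>"
proof -
  obtain l1 where l1: "0 < l1" "l1 \<le> e0" "\<And>l. \<bar>l\<bar> \<le> l1 \<Longrightarrow> mgf l - 1 \<le> s / d * \<bar>l\<bar>"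
    using mgf_sub_one_le_linear[of "s / d"] s_pos d_pos by auto
  define \<kappa> where "\<kappa> = min l1 \<rho>"
  show thesis
  proof
    show "0 < \<kappa>" "\<kappa> \<le> e0" "\<kappa> \<le> \<rho>" using l1 assms by (auto simp: \<kappa>_def)
    show "d * (mgf \<kappa> - 1) \<le> s * \<kappa>"
      using mult_left_mono[OF l1(3)[of \<kappa>], of d] \<open>0 < \<kappa>\<close> d_pos by (simp add: \<kappa>_def)
  qed
qed

lemma exists_fixed_point_between_barriers:
  assumes \<alpha>_bot: "(\<alpha> \<longlongrightarrow> \<alpha>m) at_bot" and \<alpha>m_neg: "\<alpha>m < 0"
    and C: "0 < C" and \<rho>: "0 < \<rho>" and rate: "\<And>z. T0 \<le> z \<Longrightarrow> \<alpha>p - \<alpha> z \<le> C * exp (-\<rho>*z)"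
  obtains \<phi> \<mu> \<kappa> B z0 where "admissible \<phi>" "wave_op \<phi> = \<phi>" "0 < \<mu>" "0 < \<kappa>" "0 < B"
    "\<And>t. lower_barrier B \<kappa> t \<le> \<phi> t" "\<And>t. \<phi> t \<le> upper_barrier \<mu> z0 t"
proof -
  obtain z0 where z0: "\<And>t. t \<le> z0 \<Longrightarrow> \<alpha> t < \<alpha>m/2"
    using order_tendstoD(2)[OF \<alpha>_bot, of "\<alpha>m/2"] \<alpha>m_neg by (auto simp: eventually_at_bot_linorder)
  obtain \<mu> where \<mu>: "0 < \<mu>" "\<mu> \<le> e0"
    and \<mu>_small: "\<And>t. t \<le> z0 \<Longrightarrow> s*\<mu> + d * (mgf (-\<mu>) - 1) + r * \<alpha> t \<le> 0"
    using exists_upper_barrier_rate[OF z0 \<alpha>m_neg] by blast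
  obtain \<kappa> where \<kappa>: "0 < \<kappa>" "\<kappa> \<le> e0" "\<kappa> \<le> \<rho>" and \<kappa>_small: "d * (mgf \<kappa> - 1) \<le> s * \<kappa>"
    using exists_lower_barrier_rate[OF \<rho>] by blast
  obtain B where B: "0 < B" "\<And>t. B * exp (-\<kappa>*t) < \<alpha>p \<Longrightarrow> z0 \<le> t \<and> \<alpha>p - \<alpha> t \<le> B * exp (-\<kappa>*t)"
    using lower_barrier_constant[OF \<kappa>(1,3) C rate] by blast
  have "admissible (lower_barrier B \<kappa>)" using B(1) by (simp add: admissible_lower_barrier)
  moreover have "lower_barrier B \<kappa> t \<le> upper_barrier \<mu> z0 t" for t
    using \<mu>(1) B by (intro lower_barrier_le_upper_barrier) auto
  moreover have "lower_barrier B \<kappa> t \<le> wave_op (lower_barrier B \<kappa>) t" for t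
    using \<kappa> B \<kappa>_small by (intro wave_op_lower_barrier) auto
  moreover have "wave_op (upper_barrier \<mu> z0) t \<le> upper_barrier \<mu> z0 t" for t
    using \<mu> \<mu>_small by (rule wave_op_upper_barrier)
  ultimately obtain \<phi> where "admissible \<phi>" "wave_op \<phi> = \<phi>"
    "\<And>t. lower_barrier B \<kappa> t \<le> \<phi> t" "\<And>t. \<phi> t \<le> upper_barrier \<mu> z0 t"
    by (rule monotone_iteration[OF _ admissible_upper_barrier]) blast
  then show thesis by (rule that[OF _ _ \<mu>(1) \<kappa>(1) B(1)])
qed

lemma exists_travelling_wave:
  assumes "(\<alpha> \<longlongrightarrow> \<alpha>m) at_bot" "\<alpha>m < 0"
    and "0 < C" "0 < \<rho>" "\<And>z. T0 \<le> z \<Longrightarrow> \<alpha>p - \<alpha> z \<le> C * exp (-\<rho>*z)"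
  shows "\<exists>\<phi> \<phi>' :: real \<Rightarrow> real.
           (\<forall>z. (\<phi> has_real_derivative \<phi>' z) (at z)) \<and> continuous_on UNIV \<phi>' \<and>
           (\<forall>z. \<phi> z > 0) \<and>
           (\<forall>z. - s * \<phi>' z = d * ((\<integral>y. J y * \<phi> (z - y) \<partial>lebesgue) - \<phi> z)
                              + r * \<phi> z * (\<alpha> z - \<phi> z)) \<and>
           (\<phi> \<longlongrightarrow> 0) at_bot \<and> (\<phi> \<longlongrightarrow> \<alpha>p) at_top \<and>
           (\<exists>lam0>0. \<exists>B>0. \<forall>z. \<alpha>p \<ge> \<phi> z \<and> \<phi> z \<ge> \<alpha>p - B * exp (- lam0 * z))"
proof (rule exists_fixed_point_between_barriers[OF assms])
  fix \<phi> \<mu> \<kappa> B z0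
  assume \<phi>: "admissible \<phi>" "wave_op \<phi> = \<phi>" and pos: "0 < \<mu>" "0 < \<kappa>" "0 < B"
    and lower: "\<And>t. lower_barrier B \<kappa> t \<le> \<phi> t" and upper: "\<And>t. \<phi> t \<le> upper_barrier \<mu> z0 t"
  have "0 < \<phi> z" for z
  proof -
    obtain N where N: "\<And>t. N \<le> t \<Longrightarrow> 0 < lower_barrier B \<kappa> t"
      using order_tendstoD(1)[OF lower_barrier_tendsto[OF pos(2), of B] \<alpha>p_pos]
      by (auto simp: eventually_at_top_linorder)
    have "0 < \<phi> (max N z)" using N[of "max N z"] lower[of "max N z"] by simp
    then show ?thesis by (rule fixed_point_pos[OF \<phi>, rotated]) simp
  qed
  moreover have "(\<phi> \<longlongrightarrow> 0) at_bot"
    by (rule tendsto_sandwich[OF _ _ tendsto_const upper_barrier_tendsto[OF pos(1), of z0]])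
      (use admissibleD(2)[OF \<phi>(1)] upper in auto)
  moreover have "(\<phi> \<longlongrightarrow> \<alpha>p) at_top"
    by (rule tendsto_sandwich[OF _ _ lower_barrier_tendsto[OF pos(2), of B] tendsto_const])
      (use admissibleD(3)[OF \<phi>(1)] lower in auto)
  moreover have "\<exists>lam0>0. \<exists>B>0. \<forall>z. \<alpha>p \<ge> \<phi> z \<and> \<phi> z \<ge> \<alpha>p - B * exp (- lam0 * z)"
  proof -
    have "\<forall>z. \<alpha>p \<ge> \<phi> z \<and> \<phi> z \<ge> \<alpha>p - B * exp (- \<kappa> * z)"
      using admissibleD(3)[OF \<phi>(1)] lower by (simp add: lower_barrier_def)
    then show ?thesis using pos(2,3) by blast
  qed
  moreover have "continuous_on UNIV (\<lambda>z. (\<beta> * \<phi> z - forcing \<phi> z) / s)"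
    using admissibleD(1)[OF \<phi>(1)] continuous_on_forcing[OF \<phi>(1)] s_pos by (intro continuous_intros) auto
  ultimately show ?thesis
    using fixed_point_has_derivative[OF \<phi>] fixed_point_solves[OF \<phi>]
    by (intro exI[of _ \<phi>] exI[of _ "\<lambda>z. (\<beta> * \<phi> z - forcing \<phi> z) / s"]) simp
qed

end

theorem proposition2p4:
  fixes s d r :: real and J \<alpha> :: "real \<Rightarrow> real"
    and \<alpha>m \<alpha>p :: real and \<eta> ym yp :: real and lt lh :: ereal
  assumes s_pos: "s > 0" and d_pos: "d > 0" and r_pos: "r > 0"
  (* (J1) *)
    and J_meas: "J \<in> borel_measurable lebesgue"
    and J_nonneg: "\<And>y. J y \<ge> 0"
    and J_int: "integrable lebesgue J" and J_mass: "integral\<^sup>L lebesgue J = 1"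
    and eta_pos: "\<eta> > 0" and ym_neg: "ym < 0" and yp_pos: "yp > 0"
    and J_pos_m: "\<And>y. y \<in> {ym - \<eta> <..< ym + \<eta>} \<Longrightarrow> J y > 0"
    and J_pos_p: "\<And>y. y \<in> {yp - \<eta> <..< yp + \<eta>} \<Longrightarrow> J y > 0"
  (* (J2) *)
    and J_mean: "integral\<^sup>L lebesgue (\<lambda>y. J y * y) = 0"
  (* (J3) *)
    and lt_neg: "lt < 0" and lh_pos: "0 < lh"
    and I_fin: "\<And>l. lt < ereal l \<Longrightarrow> ereal l < lh \<Longrightarrow> expmom J l < \<infinity>"
    and I_lt: "((\<lambda>l. expmom J l) \<longlongrightarrow> \<infinity>) (ereal_down lt)"
    and I_lh: "((\<lambda>l. expmom J l) \<longlongrightarrow> \<infinity>) (ereal_up lh)"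
  (* alpha continuous, (alpha1), (alpha2) *)
    and \<alpha>_cont: "continuous_on UNIV \<alpha>"
    and \<alpha>_bot: "(\<alpha> \<longlongrightarrow> \<alpha>m) at_bot" and \<alpha>_top: "(\<alpha> \<longlongrightarrow> \<alpha>p) at_top"
    and \<alpha>m_neg: "\<alpha>m < 0" and \<alpha>p_pos: "0 < \<alpha>p"
    and \<alpha>_le: "\<And>z. \<alpha> z \<le> \<alpha>p"
    and \<alpha>_rate: "\<exists>C>0. \<exists>\<rho>>0. eventually (\<lambda>z. \<alpha>p - \<alpha> z \<le> C * exp (- \<rho> * z)) at_top"
  shows "\<exists>\<phi> \<phi>' :: real \<Rightarrow> real.
           (\<forall>z. (\<phi> has_real_derivative \<phi>' z) (at z)) \<and> continuous_on UNIV \<phi>' \<and>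
           (\<forall>z. \<phi> z > 0) \<and>
           (\<forall>z. - s * \<phi>' z = d * ((\<integral>y. J y * \<phi> (z - y) \<partial>lebesgue) - \<phi> z)
                              + r * \<phi> z * (\<alpha> z - \<phi> z)) \<and>
           (\<phi> \<longlongrightarrow> 0) at_bot \<and> (\<phi> \<longlongrightarrow> \<alpha>p) at_top \<and>
           (\<exists>lam0>0. \<exists>B>0. \<forall>z. \<alpha>p \<ge> \<phi> z \<and> \<phi> z \<ge> \<alpha>p - B * exp (- lam0 * z))"
proof -
  obtain a b where ab: "lt < ereal a" "a < 0" "0 < b" "ereal b < lh"
    using ereal_dense2[OF lt_neg] ereal_dense2[OF lh_pos] by force
  define e0 where "e0 = min (-a) b"
  have "integrable lebesgue (\<lambda>y. J y * exp (l*y))" if "\<bar>l\<bar> \<le> e0" for l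
  proof (rule integrable_mult_exp_if_expmom_finite[OF J_meas J_nonneg I_fin])
    have "a \<le> l" "l \<le> b" using that by (auto simp: e0_def)
    then show "lt < ereal l" "ereal l < lh"
      using order_less_le_trans[OF ab(1)] order_le_less_trans[OF _ ab(4)] by auto
  qed
  moreover obtain A where A: "\<And>z. A \<le> \<alpha> z"
    by (rule bounded_below_if_tendsto_at_bot_at_top[OF \<alpha>_cont \<alpha>_bot \<alpha>_top]) blast
  ultimately interpret wave_operator J e0 s d r "d - r * A + 2 * r * \<alpha>p" \<alpha>p \<alpha>
    using ab s_pos d_pos r_pos J_nonneg J_mass J_mean \<alpha>_cont \<alpha>_le \<alpha>p_pos
      mult_left_mono[OF A, of r]
    by unfold_locales (auto simp: e0_def)
  obtain C \<rho> T0 where "0 < C" "0 < \<rho>" "\<And>z. T0 \<le> z \<Longrightarrow> \<alpha>p - \<alpha> z \<le> C * exp (- \<rho> * z)"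
    using \<alpha>_rate by (auto simp: eventually_at_top_linorder)
  then show ?thesis by (rule exists_travelling_wave[OF \<alpha>_bot \<alpha>m_neg])
qed

end
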